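(* Let $j,a\in\mathbb{N}$, $r\in\mathbb{N}_0$, and $p$ a prime. Then \[c_j^{(r)}(p^a)=\binom{a+r-1}{j+r-1}.\]
   Context: For $j,n\in\mathbb{N}$, $c_j(n)$ is the number of ordered $j$-tuples of integers each $\ge 2$ with product $n$. The associated divisor functions are defined by $c_j^{(0)}=c_j$ and $c_j^{(r)}(n)=\sum_{m\mid n}c_j^{(r-1)}(m)$ for $r,n\in\mathbb{N}$. Binomial coefficients $\binom{N}{K}$ with $K>N\ge 0$ are $0$. *)

theory Defs
  imports "HOL-Computational_Algebra.Primes"
begin

text \<open>c j n: number of ordered j-tuples (lists of length j) of integers \<ge> 2 whose
  product is n. Since n \<ge> 1 forces all entries positive, natural-number entries suffice.\<close>
definition c :: "nat \<Rightarrow> nat \<Rightarrow> nat" where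
  "c j n = card {xs :: nat list. length xs = j \<and> (\<forall>x\<in>set xs. 2 \<le> x) \<and> prod_list xs = n}"

fun cr :: "nat \<Rightarrow> nat \<Rightarrow> nat \<Rightarrow> nat" where
  "cr j 0 n = c j n"
| "cr j (Suc r) n = (\<Sum>m | m dvd n. cr j r m)"

end

theory Submission
  imports Defs
begin

text \<open>Peeling off the first factor gives
  \<open>c (j + 1) n = (\<Sum>d | d dvd n \<and> 2 \<le> d. c j (n div d))\<close>. At a prime power \<open>p ^ a\<close>
  the divisors are \<open>p ^ i\<close> with \<open>i \<le> a\<close>, so both this recursion and the defining recursion
  of \<open>cr\<close> become prefix sums in the exponent. Starting from \<open>c 1 (p ^ a) = 1\<close> for
  \<open>a \<ge> 1\<close>, every prefix summation raises both arguments of the binomial coefficient by one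
  (hockey-stick identity), which yields the formula.\<close>

definition ordered_factorizations :: "nat \<Rightarrow> nat \<Rightarrow> nat list set" where
  "ordered_factorizations j n =
     {xs. length xs = j \<and> (\<forall>x\<in>set xs. 2 \<le> x) \<and> prod_list xs = n}"

lemma c_eq_card_ordered_factorizations: "c j n = card (ordered_factorizations j n)"
  by (simp add: c_def ordered_factorizations_def)

lemma finite_ordered_factorizations:
  assumes "n \<noteq> 0"
  shows "finite (ordered_factorizations j n)"
proof (rule finite_subset)
  show "ordered_factorizations j n \<subseteq> {xs. set xs \<subseteq> {..n} \<and> length xs = j}"
    using assms by (auto simp: ordered_factorizations_def intro: dvd_imp_le prod_list_dvd)
  show "finite {xs. set xs \<subseteq> {..n} \<and> length xs = j}"
    by (rule finite_lists_length_eq) simp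
qed

lemma ordered_factorizations_Suc:
  "ordered_factorizations (Suc j) n =
     (\<Union>d\<in>{d. d dvd n \<and> 2 \<le> d}. (#) d ` ordered_factorizations j (n div d))"
proof (intro equalityI subsetI)
  fix xs assume "xs \<in> ordered_factorizations (Suc j) n"
  then obtain x ys where xs: "xs = x # ys" and "2 \<le> x" "x * prod_list ys = n"
    and "ys \<in> ordered_factorizations j (prod_list ys)"
    by (cases xs) (auto simp: ordered_factorizations_def)
  then have "x \<in> {d. d dvd n \<and> 2 \<le> d}" "ys \<in> ordered_factorizations j (n div x)"
    by auto
  then show "xs \<in> (\<Union>d\<in>{d. d dvd n \<and> 2 \<le> d}. (#) d ` ordered_factorizations j (n div d))"
    unfolding xs by blast
qed (auto simp: ordered_factorizations_def)

lemma c_0: "c 0 n = (if n = 1 then 1 else 0)"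
proof -
  have "ordered_factorizations 0 n = (if n = 1 then {[]} else {})"
    by (auto simp: ordered_factorizations_def)
  then show ?thesis
    by (simp add: c_eq_card_ordered_factorizations)
qed

lemma c_Suc:
  assumes "n \<noteq> 0"
  shows "c (Suc j) n = (\<Sum>d\<in>{d. d dvd n \<and> 2 \<le> d}. c j (n div d))"
proof -
  let ?D = "{d. d dvd n \<and> 2 \<le> d}"
  have "finite ?D"
    using assms by (auto intro: finite_subset[of _ "{..n}"] dvd_imp_le)
  moreover have "finite ((#) d ` ordered_factorizations j (n div d))" if "d \<in> ?D" for d
    using that assms by (auto intro!: finite_ordered_factorizations elim!: dvdE)
  ultimately have "card (\<Union>d\<in>?D. (#) d ` ordered_factorizations j (n div d))
      = (\<Sum>d\<in>?D. card ((#) d ` ordered_factorizations j (n div d)))"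
    by (intro card_UN_disjoint) auto
  then show ?thesis
    by (simp add: c_eq_card_ordered_factorizations ordered_factorizations_Suc card_image)
qed

lemma cr_Suc_one: "cr (Suc j) r 1 = 0"
proof (induction r)
  case 0
  show ?case
    using c_Suc[of 1 j] by simp
next
  case (Suc r)
  then show ?case
    by simp
qed

lemma sum_choose_upper_lessThan: "(\<Sum>i<a. i choose k) = a choose Suc k"
  by (cases a) (simp_all add: lessThan_Suc_atMost sum_choose_upper)

lemma sum_choose_upper_shift:
  assumes "r \<le> k"
  shows "(\<Sum>i\<le>a. (i + r) choose k) = Suc (a + r) choose Suc k"
proof (induction a)
  case 0
  show ?case
    using assms by (cases "r = k") simp_all
next
  case (Suc a)
  then show ?case
    by simp
qed

context
  fixes p :: nat
  assumes p: "prime p"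
begin

lemma sum_divisors_prime_power: "(\<Sum>d | d dvd p ^ a. f d) = (\<Sum>i\<le>a. f (p ^ i))"
proof -
  have "{d. d dvd p ^ a} = (\<lambda>i. p ^ i) ` {..a}"
    using divides_primepow_nat[OF p] by auto
  moreover have "inj (\<lambda>i. p ^ i)"
    using p prime_gt_1_nat by (auto intro!: injI simp: power_inject_exp)
  ultimately show ?thesis
    by (simp add: sum.reindex inj_on_subset)
qed

lemma c_Suc_prime_power: "c (Suc j) (p ^ a) = (\<Sum>i<a. c j (p ^ i))"
proof -
  have p_gt_1: "1 < p"
    using p prime_gt_1_nat by blast
  have "{d. d dvd p ^ a \<and> 2 \<le> d} = (\<lambda>i. p ^ Suc i) ` {..<a}"
  proof (intro equalityI subsetI)
    fix d assume "d \<in> {d. d dvd p ^ a \<and> 2 \<le> d}"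
    then obtain i where "i \<le> a" "d = p ^ i" "2 \<le> d"
      using divides_primepow_nat[OF p] by auto
    moreover from this obtain k where "i = Suc k"
      by (cases i) auto
    ultimately show "d \<in> (\<lambda>i. p ^ Suc i) ` {..<a}"
      by (auto simp del: power_Suc)
  next
    fix d assume "d \<in> (\<lambda>i. p ^ Suc i) ` {..<a}"
    then obtain k where "k < a" "d = p ^ Suc k"
      by blast
    moreover have "p ^ 1 \<le> p ^ Suc k"
      using p_gt_1 by (intro power_increasing) simp_all
    ultimately show "d \<in> {d. d dvd p ^ a \<and> 2 \<le> d}"
      using p_gt_1 by (simp add: le_imp_power_dvd Suc_le_eq del: power_Suc)
  qed
  moreover have "inj (\<lambda>i. p ^ Suc i)"
    using p_gt_1 by (auto intro!: injI simp: power_inject_exp)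
  moreover have "p ^ a div p ^ Suc i = p ^ (a - Suc i)" if "i < a" for i
    using that p_gt_1 by (simp add: power_diff)
  ultimately have "c (Suc j) (p ^ a) = (\<Sum>i<a. c j (p ^ (a - Suc i)))"
    using p_gt_1 by (simp add: c_Suc sum.reindex inj_on_subset)
  also have "\<dots> = (\<Sum>i<a. c j (p ^ i))"
    by (rule sum.nat_diff_reindex)
  finally show ?thesis .
qed

lemma c_prime_power: "c (Suc k) (p ^ Suc a) = a choose k"
proof (induction k arbitrary: a)
  case 0
  have "p ^ Suc i \<noteq> 1" for i
    using prime_gt_1_nat[OF p] by simp
  then show ?case
    by (simp add: c_Suc_prime_power sum.lessThan_Suc_shift c_0 del: power_Suc)
next
  case (Suc k)
  have "c (Suc (Suc k)) (p ^ Suc a) = (\<Sum>i<a. c (Suc k) (p ^ Suc i))"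
    unfolding c_Suc_prime_power[of "Suc k"] sum.lessThan_Suc_shift
    using cr_Suc_one[of k 0] by simp
  also have "\<dots> = a choose Suc k"
    by (simp add: Suc.IH sum_choose_upper_lessThan del: power_Suc)
  finally show ?case .
qed

lemma cr_prime_power: "cr (Suc k) r (p ^ Suc a) = (a + r) choose (k + r)"
proof (induction r arbitrary: a)
  case 0
  then show ?case
    by (simp add: c_prime_power del: power_Suc)
next
  case (Suc r)
  have "cr (Suc k) (Suc r) (p ^ Suc a) = (\<Sum>i\<le>a. cr (Suc k) r (p ^ Suc i))"
    unfolding cr.simps(2) sum_divisors_prime_power sum.atMost_Suc_shift
    using cr_Suc_one[of k r] by simp
  also have "\<dots> = (a + Suc r) choose (k + Suc r)"
    by (simp add: Suc.IH sum_choose_upper_shift del: power_Suc cr.simps(1))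
  finally show ?case .
qed

end

theorem lemma15:
  fixes j a r p :: nat
  assumes "j \<ge> 1" and "a \<ge> 1" and "prime p"
  shows "cr j r (p ^ a) = (a + r - 1) choose (j + r - 1)"
proof -
  obtain k b where "j = Suc k" "a = Suc b"
    using assms(1,2) by (cases j; cases a) auto
  then show ?thesis
    using cr_prime_power[OF assms(3), of k r b] by simp
qed

end
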